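(* Let $X$ be a Euclidean polyhedral space, $U\subset X$ an open subset, $\Pi$ a polyhedral complex on $X$, $f,g$ piecewise affine functions on $U$ defined on $\Pi$, and $c$ a $k$-dimensional weight on $\Pi|_U$. Then $f\cdot(g\cdot c)=g\cdot(f\cdot c)$.
   Context: Polyhedral spaces. Let $X$ be a second countable topological space. A polyhedral structure $\Pi$ on $X$ is a locally finite covering of $X$ by distinct closed subsets $\sigma$ (the polyhedra of $\Pi$), each equipped with a finite-dimensional vector space $M_\sigma$ of continuous real functions on $\sigma$ such that, with $N_\sigma=\operatorname{Hom}(M_\sigma,\mathbb{R})$, the evaluation map $\phi_\sigma\colon\sigma\to N_\sigma$ is a homeomorphism onto a full-dimensional convex polyhedron of an affine hyperplane $H_\sigma\subset N_\sigma$ not containing $0$. Faces of $\sigma$ are the preimages under $\phi_\sigma$ of faces of $\phi_\sigma(\sigma)$ (the empty set is a face). One requires that every face of a polyhedron of $\Pi$ is a polyhedron of $\Pi$ whose function space consists of the restrictions of the functions in $M_\sigma$, and that any two polyhedra intersect in a common face. Via $\phi_\sigma$, each polyhedron inherits an affine structure (its affine functions are the elements of $M_\sigma$), a dimension, faces, facets (codimension-one faces), and a relative interior. $\Pi'$ is a subdivision of $\Pi$ if every polyhedron of $\Pi'$ is contained in a polyhedron of $\Pi$ with affine inclusion; two structures are equivalent if they have a common subdivision. A polyhedral space is $X$ with an equivalence class of polyhedral structures; a polyhedral complex on $X$ is a member of this class. We write $\tau\prec\sigma$ (or $\sigma\succ\tau$) if $\tau$ is a face of $\sigma$. Euclidean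 polyhedral spaces. A Euclidean polyhedral space is a polyhedral space $X$ together with a finite-dimensional real vector space $N_X$ with a Euclidean inner product and a map $\iota\colon X\to N_X$ whose image lies in an affine hyperplane $H_X$ not containing $0$, such that there is a polyhedral complex on $X$ on each of whose polyhedra $\iota$ is injective and affine; only polyhedral complexes with this property are called polyhedral complexes on $X$. For $\sigma\in\Pi$ and a nonempty facet $\tau$ of $\sigma$, $v_{\sigma\setminus\tau}\in N_X$ denotes the unit vector orthogonal to the affine span of $\iota(\tau)$, parallel to the affine span of $\iota(\sigma)$, and pointing from $\iota(\tau)$ towards $\iota(\sigma)$. Weights and products. For $U\subset X$ open, $\Pi|_U$ is the set of polyhedra of $\Pi$ meeting $U$ and $\Pi|_U(k)$ the set of those of dimension $k$. A $k$-dimensional weight on $\Pi|_U$ is a map $c\colon\Pi|_U(k)\to\mathbb{R}$ (extended by $0$ on polyhedra of other dimensions). A piecewise affine function on $U$ defined on $\Pi$ is a function $f\colon U\to\mathbb{R}$ such that for every $\sigma\in\Pi|_U$, $f|_{\sigma\cap U}$ is the restriction of an affine function on $\sigma$; one then chooses linear functions $f_\sigma\colon N_X\to\mathbb{R}$ with $f=f_\sigma\circ\iota$ on $\sigma\cap U$. The product $f\cdot c$ is the $(k-1)$-dimensional weight on $\Pi|_U$ given for $\tau\in\Pi|_U(k-1)$ by $(f\cdot c)(\tau)=-\sum_{\sigma\in\Pi|_U(k),\,\sigma\succ\tau}c(\sigma)\,f_\sigma(v_{\sigma\setminus\tau})$ (this does not depend on the choice of the $f_\sigma$). *)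

theory Defs
  imports "HOL-Analysis.Analysis"
begin

text \<open>X is the type 'x (a second countable
topological space), N_X is the Euclidean space 'n, and iota is the map
X to N_X.  Since iota is required to be injective and affine on every
polyhedron of a polyhedral complex on X, the affine structure M_sigma of each
polyhedron sigma is the space of restrictions of linear functionals on N_X
composed with iota, and the evaluation map phi_sigma is identified with
iota restricted to sigma.\<close>

definition image_in_hyperplane :: "('x \<Rightarrow> 'n::euclidean_space) \<Rightarrow> bool" where
  "image_in_hyperplane \<iota> \<longleftrightarrow>
     (\<exists>a b. a \<noteq> 0 \<and> b \<noteq> 0 \<and> (\<forall>x. a \<bullet> \<iota> x = b))"

definition poly_face :: "('x \<Rightarrow> 'n::euclidean_space) \<Rightarrow> 'x set \<Rightarrow> 'x set \<Rightarrow> bool" where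
  "poly_face \<iota> \<tau> \<sigma> \<longleftrightarrow> (\<exists>F. F face_of (\<iota> ` \<sigma>) \<and> \<tau> = {x\<in>\<sigma>. \<iota> x \<in> F})"

text \<open>Dimension of a polyhedron (the empty polyhedron has dimension -1).\<close>
definition pdim :: "('x \<Rightarrow> 'n::euclidean_space) \<Rightarrow> 'x set \<Rightarrow> int" where
  "pdim \<iota> \<sigma> = aff_dim (\<iota> ` \<sigma>)"

definition euclidean_polyhedral_complex ::
    "('x::topological_space \<Rightarrow> 'n::euclidean_space) \<Rightarrow> 'x set set \<Rightarrow> bool" where
  "euclidean_polyhedral_complex \<iota> P \<longleftrightarrow>
     image_in_hyperplane \<iota> \<and>
     \<Union>P = UNIV \<and>
     (\<forall>x. \<exists>V. open V \<and> x \<in> V \<and> finite {\<sigma>\<in>P. \<sigma> \<inter> V \<noteq> {}}) \<and>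
     (\<forall>\<sigma>\<in>P. closed \<sigma> \<and> inj_on \<iota> \<sigma> \<and> (\<exists>g. homeomorphism \<sigma> (\<iota> ` \<sigma>) \<iota> g)
               \<and> polyhedron (\<iota> ` \<sigma>)) \<and>
     (\<forall>\<sigma>\<in>P. \<forall>\<tau>. poly_face \<iota> \<tau> \<sigma> \<longrightarrow> \<tau> \<in> P) \<and>
     (\<forall>\<sigma>\<in>P. \<forall>\<tau>\<in>P. poly_face \<iota> (\<sigma> \<inter> \<tau>) \<sigma> \<and> poly_face \<iota> (\<sigma> \<inter> \<tau>) \<tau>)"

definition restr :: "'x set set \<Rightarrow> 'x set \<Rightarrow> 'x set set" where
  "restr P U = {\<sigma>\<in>P. \<sigma> \<inter> U \<noteq> {}}"

definition pw_affine ::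
    "('x \<Rightarrow> 'n::euclidean_space) \<Rightarrow> 'x set set \<Rightarrow> 'x set \<Rightarrow> ('x \<Rightarrow> real) \<Rightarrow> bool" where
  "pw_affine \<iota> P U f \<longleftrightarrow>
     (\<forall>\<sigma>\<in>restr P U. \<exists>l::'n \<Rightarrow> real. linear l \<and> (\<forall>x\<in>\<sigma> \<inter> U. f x = l (\<iota> x)))"

definition lin_rep ::
    "('x \<Rightarrow> 'n::euclidean_space) \<Rightarrow> 'x set \<Rightarrow> 'x set \<Rightarrow> ('x \<Rightarrow> real) \<Rightarrow> 'n \<Rightarrow> real" where
  "lin_rep \<iota> \<sigma> U f = (SOME l. linear l \<and> (\<forall>x\<in>\<sigma> \<inter> U. f x = l (\<iota> x)))"

definition normal_vec :: "('x \<Rightarrow> 'n::euclidean_space) \<Rightarrow> 'x set \<Rightarrow> 'x set \<Rightarrow> 'n" where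
  "normal_vec \<iota> \<sigma> \<tau> = (THE v. norm v = 1 \<and>
      v \<in> span {y - z | y z. y \<in> \<iota> ` \<sigma> \<and> z \<in> \<iota> ` \<sigma>} \<and>
      (\<forall>y\<in>\<iota> ` \<tau>. \<forall>z\<in>\<iota> ` \<tau>. v \<bullet> (y - z) = 0) \<and>
      (\<forall>y\<in>\<iota> ` \<sigma>. \<forall>z\<in>\<iota> ` \<tau>. 0 \<le> v \<bullet> (y - z)))"

definition is_weight ::
    "('x \<Rightarrow> 'n::euclidean_space) \<Rightarrow> 'x set set \<Rightarrow> 'x set \<Rightarrow> int \<Rightarrow> ('x set \<Rightarrow> real) \<Rightarrow> bool" where
  "is_weight \<iota> P U k c \<longleftrightarrow>
     (\<forall>\<sigma>. \<not> (\<sigma> \<in> restr P U \<and> pdim \<iota> \<sigma> = k) \<longrightarrow> c \<sigma> = 0)"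

definition wmult ::
    "('x \<Rightarrow> 'n::euclidean_space) \<Rightarrow> 'x set set \<Rightarrow> 'x set \<Rightarrow> ('x \<Rightarrow> real) \<Rightarrow> int
     \<Rightarrow> ('x set \<Rightarrow> real) \<Rightarrow> 'x set \<Rightarrow> real" where
  "wmult \<iota> P U f k c \<tau> =
     (if \<tau> \<in> restr P U \<and> pdim \<iota> \<tau> = k - 1
      then - (\<Sum>\<sigma>\<in>{\<sigma>\<in>restr P U. pdim \<iota> \<sigma> = k \<and> poly_face \<iota> \<tau> \<sigma>}.
                 c \<sigma> * lin_rep \<iota> \<sigma> U f (normal_vec \<iota> \<sigma> \<tau>))
      else 0)"

end

theory Submission
  imports Defs
begin

(* Let rho have dimension k - 2. Expanding both products writes (f.(g.c))(rho) as a sum, over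
   the k-dimensional sigma containing rho, of c(sigma) times the sum of
   g_sigma(v(sigma,tau)) * f_tau(v(tau,rho)) over the faces tau strictly between rho and sigma;
   as f_tau and f_sigma agree on the directions of tau, f_tau may be replaced by f_sigma.
   Since rho has codimension two in the polyhedron sigma, exactly two facets tau1, tau2 of sigma
   contain rho, and the unit normals n_i = v(sigma,tau_i) and u_i = v(tau_i,rho) all lie in the
   plane orthogonal to rho inside sigma. Their sign conditions force n1 = b (u2 - <u1,u2> u1)
   and n2 = b (u1 - <u1,u2> u2) for one scalar b, and then
   g(n1) f(u1) + g(n2) f(u2) is symmetric in f and g. *)

section \<open>Direction spaces and inward normals of facets\<close>

definition direction_space :: "'a::euclidean_space set \<Rightarrow> 'a set" where
  "direction_space S = span {y - z | y z. y \<in> S \<and> z \<in> S}"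

lemma subspace_direction_space [simp]: "subspace (direction_space S)"
  unfolding direction_space_def by simp

lemma diff_in_direction_space: "y \<in> S \<Longrightarrow> z \<in> S \<Longrightarrow> y - z \<in> direction_space S"
  unfolding direction_space_def by (rule span_base) blast

lemma direction_space_mono: "S \<subseteq> T \<Longrightarrow> direction_space S \<subseteq> direction_space T"
  unfolding direction_space_def by (rule span_mono) blast

lemma direction_space_eq_span_translate:
  assumes "a \<in> S"
  shows "direction_space S = span ((\<lambda>y. y - a) ` S)"
proof
  show "direction_space S \<subseteq> span ((\<lambda>y. y - a) ` S)"
    unfolding direction_space_def
  proof (rule span_minimal)
    show "{y - z |y z. y \<in> S \<and> z \<in> S} \<subseteq> span ((\<lambda>y. y - a) ` S)"
    proof clarify
      fix y z assume "y \<in> S" "z \<in> S"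
      then have "(y - a) - (z - a) \<in> span ((\<lambda>y. y - a) ` S)"
        by (intro span_diff span_base) auto
      then show "y - z \<in> span ((\<lambda>y. y - a) ` S)" by simp
    qed
  qed simp
  show "span ((\<lambda>y. y - a) ` S) \<subseteq> direction_space S"
    by (rule span_minimal) (auto simp: assms diff_in_direction_space)
qed

lemma aff_dim_eq_dim_direction_space:
  assumes "a \<in> S"
  shows "aff_dim S = int (dim (direction_space S))"
  using aff_dim_eq_dim_subtract[of a S] assms
  by (simp add: hull_inc direction_space_eq_span_translate)

lemma mem_affine_hull_if_direction:
  assumes "a \<in> S" "x - a \<in> direction_space S"
  shows "x \<in> affine hull S"
proof -
  have "affine hull S = (\<lambda>x. a + x) ` span ((\<lambda>x. - a + x) ` S)"
    by (rule affine_hull_span_gen) (simp add: assms hull_inc)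
  moreover have "(\<lambda>x. - a + x) ` S = (\<lambda>y. y - a) ` S" by auto
  ultimately show ?thesis
    using assms direction_space_eq_span_translate[OF assms(1)]
    by (metis add.commute diff_add_cancel image_eqI)
qed

lemma inner_direction_space_eq_0:
  assumes "a \<in> S" "\<And>y. y \<in> S \<Longrightarrow> v \<bullet> (y - a) = 0" "d \<in> direction_space S"
  shows "v \<bullet> d = 0"
proof -
  have "orthogonal v d"
    using assms(3) unfolding direction_space_eq_span_translate[OF assms(1)]
    by (rule orthogonal_to_span) (use assms(2) in \<open>auto simp: orthogonal_def\<close>)
  then show ?thesis by (simp add: orthogonal_def)
qed

lemma face_of_mem_if_direction:
  assumes "convex S" "G face_of S" "a \<in> G" "x \<in> S" "x - a \<in> direction_space G"
  shows "x \<in> G"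
  using face_of_imp_eq_affine_Int[OF assms(1,2)] mem_affine_hull_if_direction[OF assms(3,5)]
    assms(4) by blast

lemma linear_eq_on_direction_space:
  fixes l1 l2 :: "'a::euclidean_space \<Rightarrow> real"
  assumes C: "convex C" and T: "open T" "C \<inter> T \<noteq> {}" and l: "linear l1" "linear l2"
    and eq: "\<And>y. y \<in> C \<inter> T \<Longrightarrow> l1 y = l2 y" and u: "u \<in> direction_space C"
  shows "l1 u = l2 u"
proof -
  have "affine hull (C \<inter> T) = affine hull C" by (rule affine_hull_convex_Int_open[OF C T])
  then have "C \<subseteq> span (C \<inter> T)"
    using hull_subset[of C affine] affine_hull_subset_span[of "C \<inter> T"] by blast
  then have "y - z \<in> span (C \<inter> T)" if "y \<in> C" "z \<in> C" for y z
    using that span_diff by blast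
  then have "direction_space C \<subseteq> span (C \<inter> T)"
    unfolding direction_space_def by (intro span_minimal) auto
  then have "u \<in> span (C \<inter> T)" using u by blast
  then show ?thesis by (rule real_vector.linear_eq_on[OF l _ eq])
qed

lemma codim_one_unit_orthogonal_exists:
  fixes A B :: "'a::euclidean_space set"
  assumes "subspace A" "subspace B" "A \<subseteq> B" "dim B = dim A + 1"
  obtains v where "v \<in> B" "norm v = 1" "\<And>d. d \<in> A \<Longrightarrow> v \<bullet> d = 0"
proof -
  have "dim {y \<in> B. \<forall>x \<in> A. orthogonal x y} = 1"
    using dim_subspace_orthogonal_to_vectors[OF assms(1-3)] assms(4) by simp
  then obtain w where w: "w \<in> B" "\<forall>x \<in> A. orthogonal x w" "w \<noteq> 0"
    by (metis (no_types, lifting) dim_eq_0 mem_Collect_eq singletonI subsetI zero_neq_one)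
  show thesis
  proof
    show "w /\<^sub>R norm w \<in> B" using w(1) assms(2) by (simp add: subspace_scale)
    show "norm (w /\<^sub>R norm w) = 1" using w(3) by simp
    show "(w /\<^sub>R norm w) \<bullet> d = 0" if "d \<in> A" for d
      using w(2) that by (simp add: orthogonal_def inner_commute)
  qed
qed

lemma codim_one_orthogonal_decomposition:
  fixes A B :: "'a::euclidean_space set"
  assumes A: "subspace A" and B: "subspace B" "A \<subseteq> B" "dim B = dim A + 1"
    and v: "v \<in> B" "norm v = 1" "\<And>d. d \<in> A \<Longrightarrow> v \<bullet> d = 0" and x: "x \<in> B"
  shows "x - (v \<bullet> x) *\<^sub>R v \<in> A"
proof -
  define W where "W = {y \<in> B. \<forall>x \<in> A. orthogonal x y}"
  have "W = B \<inter> {y. \<forall>x \<in> A. orthogonal x y}" by (auto simp: W_def)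
  then have "subspace W" using B(1) subspace_orthogonal_to_vectors subspace_inter by metis
  have "dim W = 1"
    using dim_subspace_orthogonal_to_vectors[OF A B(1,2)] B(3) by (simp add: W_def)
  have vW: "v \<in> W" using v by (simp add: W_def orthogonal_def inner_commute)
  have W: "W = span {v}"
  proof (rule sym, rule subspace_dim_equal)
    show "span {v} \<subseteq> W" using vW \<open>subspace W\<close> by (simp add: span_minimal)
    show "dim W \<le> dim (span {v})" using \<open>dim W = 1\<close> v(2) by (auto simp: dim_singleton)
  qed (simp_all add: \<open>subspace W\<close>)
  obtain y z where y: "y \<in> span A" and z: "\<And>w. w \<in> span A \<Longrightarrow> orthogonal z w"
    and xyz: "x = y + z"
    using orthogonal_subspace_decomp_exists by blast
  have "y \<in> A" using y A by (metis span_eq_iff)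
  have "z = x - y" using xyz by simp
  then have "z \<in> B" using x \<open>y \<in> A\<close> B(1,2) by (auto intro: subspace_diff)
  moreover have "\<forall>w \<in> A. orthogonal w z"
    using z by (simp add: span_base orthogonal_commute)
  ultimately have "z \<in> W" by (simp add: W_def)
  then obtain t where zt: "z = t *\<^sub>R v" using W span_singleton by auto
  have "v \<bullet> x = t" using xyz zt v(3)[OF \<open>y \<in> A\<close>] v(2) by (simp add: inner_add_right dot_square_norm)
  then show ?thesis using xyz zt \<open>y \<in> A\<close> by simp
qed

lemma codim_one_unit_orthogonal_unique:
  fixes A B :: "'a::euclidean_space set"
  assumes "subspace A" "subspace B" "A \<subseteq> B" "dim B = dim A + 1"
    and v: "v \<in> B" "norm v = 1" "\<And>d. d \<in> A \<Longrightarrow> v \<bullet> d = 0"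
    and w: "w \<in> B" "norm w = 1" "\<And>d. d \<in> A \<Longrightarrow> w \<bullet> d = 0"
  shows "w = v \<or> w = - v"
proof -
  define p where "p = w - (v \<bullet> w) *\<^sub>R v"
  have "p \<in> A" unfolding p_def by (rule codim_one_orthogonal_decomposition[OF assms(1-7) w(1)])
  then have "p \<bullet> p = 0" using v(3) w(3) by (simp add: p_def inner_diff_left)
  then have w_eq: "w = (v \<bullet> w) *\<^sub>R v" by (simp add: p_def)
  then have "\<bar>v \<bullet> w\<bar> = 1"
    using v(2) w(2) by (metis norm_scaleR real_norm_def mult.right_neutral)
  then have "v \<bullet> w = 1 \<or> v \<bullet> w = - 1" by linarith
  then show ?thesis using w_eq by auto
qed

definition is_inward_normal :: "'a::euclidean_space set \<Rightarrow> 'a set \<Rightarrow> 'a \<Rightarrow> bool" where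
  "is_inward_normal S G v \<longleftrightarrow> norm v = 1 \<and> v \<in> direction_space S \<and>
     (\<forall>y\<in>G. \<forall>z\<in>G. v \<bullet> (y - z) = 0) \<and> (\<forall>y\<in>S. \<forall>z\<in>G. 0 \<le> v \<bullet> (y - z))"

definition inward_normal :: "'a::euclidean_space set \<Rightarrow> 'a set \<Rightarrow> 'a" where
  "inward_normal S G = (THE v. is_inward_normal S G v)"

lemma normal_vec_eq_inward_normal: "normal_vec \<iota> \<sigma> \<tau> = inward_normal (\<iota> ` \<sigma>) (\<iota> ` \<tau>)"
  unfolding normal_vec_def inward_normal_def is_inward_normal_def direction_space_def ..

lemma is_inward_normal_orthogonal:
  assumes "is_inward_normal S G v" "a \<in> G" "d \<in> direction_space G"
  shows "v \<bullet> d = 0"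
  by (rule inner_direction_space_eq_0[OF assms(2) _ assms(3)])
    (use assms(1,2) in \<open>auto simp: is_inward_normal_def\<close>)

lemma facet_of_direction_space:
  assumes "G facet_of S"
  shows "direction_space G \<subseteq> direction_space S"
    and "dim (direction_space S) = dim (direction_space G) + 1"
proof -
  obtain a where a: "a \<in> G" using assms by (auto simp: facet_of_def)
  have "G \<subseteq> S" using assms by (rule facet_of_imp_subset)
  then show "direction_space G \<subseteq> direction_space S" by (rule direction_space_mono)
  have "aff_dim G = aff_dim S - 1" using assms by (simp add: facet_of_def)
  moreover have "aff_dim G = int (dim (direction_space G))"
    using a by (rule aff_dim_eq_dim_direction_space)
  moreover have "aff_dim S = int (dim (direction_space S))"
    using a \<open>G \<subseteq> S\<close> by (intro aff_dim_eq_dim_direction_space) auto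
  ultimately show "dim (direction_space S) = dim (direction_space G) + 1" by linarith
qed

lemma facet_of_hyperplane_section:
  assumes "convex S" "G facet_of S" "a \<in> G"
    and v: "v \<in> direction_space S" "norm v = 1" "\<And>d. d \<in> direction_space G \<Longrightarrow> v \<bullet> d = 0"
    and x: "x \<in> S"
  shows "v \<bullet> (x - a) = 0 \<longleftrightarrow> x \<in> G"
proof
  assume "v \<bullet> (x - a) = 0"
  have "x - a \<in> direction_space S"
    using assms(2,3) x facet_of_imp_subset diff_in_direction_space by blast
  then have "x - a \<in> direction_space G"
    using codim_one_orthogonal_decomposition[OF subspace_direction_space subspace_direction_space
        facet_of_direction_space[OF assms(2)] v \<open>x - a \<in> direction_space S\<close>]
      \<open>v \<bullet> (x - a) = 0\<close>
    by simp
  then show "x \<in> G"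
    using face_of_mem_if_direction assms(1,3) x facet_of_imp_face_of[OF assms(2)] by blast
next
  assume "x \<in> G"
  then show "v \<bullet> (x - a) = 0" using v(3) diff_in_direction_space assms(3) by blast
qed

lemma face_of_linear_one_sided:
  assumes "convex S" "G face_of S" "a \<in> G"
    and hyperplane: "\<And>x. x \<in> S \<Longrightarrow> v \<bullet> (x - a) = 0 \<longleftrightarrow> x \<in> G"
    and y: "y \<in> S" "0 < v \<bullet> (y - a)" and x: "x \<in> S"
  shows "0 \<le> v \<bullet> (x - a)"
proof (rule ccontr)
  assume "\<not> 0 \<le> v \<bullet> (x - a)"
  define \<mu> where "\<mu> = v \<bullet> (y - a) / (v \<bullet> (y - a) - v \<bullet> (x - a))"
  have \<mu>: "0 < \<mu>" "\<mu> < 1"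
    using y(2) \<open>\<not> 0 \<le> v \<bullet> (x - a)\<close> by (auto simp: \<mu>_def divide_simps)
  define p where "p = (1 - \<mu>) *\<^sub>R y + \<mu> *\<^sub>R x"
  have p_a: "p - a = (1 - \<mu>) *\<^sub>R (y - a) + \<mu> *\<^sub>R (x - a)"
    by (simp add: p_def algebra_simps)
  have "v \<bullet> (p - a) = (1 - \<mu>) * (v \<bullet> (y - a)) + \<mu> * (v \<bullet> (x - a))"
    unfolding p_a inner_add_right inner_scaleR_right ..
  also have "\<dots> = v \<bullet> (y - a) - \<mu> * (v \<bullet> (y - a) - v \<bullet> (x - a))"
    by (simp add: algebra_simps)
  also have "\<dots> = 0" using y(2) \<open>\<not> 0 \<le> v \<bullet> (x - a)\<close> by (simp add: \<mu>_def)
  finally have "v \<bullet> (p - a) = 0" .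
  moreover have "p \<in> S" unfolding p_def using \<mu> by (intro convexD[OF assms(1) y(1) x]) auto
  ultimately have "p \<in> G" using hyperplane by blast
  moreover have "p \<in> open_segment y x"
    using \<mu> y(2) \<open>\<not> 0 \<le> v \<bullet> (x - a)\<close> unfolding in_segment p_def by auto
  ultimately have "y \<in> G" using face_ofD[OF assms(2) _ y(1) x] by blast
  then show False using hyperplane[OF y(1)] y(2) by simp
qed

lemma is_inward_normal_exists:
  assumes S: "convex S" and G: "G facet_of S"
  obtains v where "is_inward_normal S G v"
proof -
  obtain a where a: "a \<in> G" using G by (auto simp: facet_of_def)
  obtain n where n: "n \<in> direction_space S" "norm n = 1"
    "\<And>d. d \<in> direction_space G \<Longrightarrow> n \<bullet> d = 0"
    using codim_one_unit_orthogonal_exists[OF subspace_direction_space subspace_direction_space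
        facet_of_direction_space[OF G]]
    by blast
  have "G \<noteq> S" using G by auto
  then obtain y0 where y0: "y0 \<in> S" "y0 \<notin> G" using facet_of_imp_subset[OF G] by blast
  define v where "v = (if 0 < n \<bullet> (y0 - a) then n else - n)"
  have v: "v \<in> direction_space S" "norm v = 1" "\<And>d. d \<in> direction_space G \<Longrightarrow> v \<bullet> d = 0"
    using n by (auto simp: v_def subspace_neg)
  have "n \<bullet> (y0 - a) \<noteq> 0" using facet_of_hyperplane_section[OF S G a n y0(1)] y0(2) by blast
  then have v_y0: "0 < v \<bullet> (y0 - a)" by (auto simp: v_def)
  have "v \<bullet> (y - z) = 0" if "y \<in> G" "z \<in> G" for y z
    using v(3) diff_in_direction_space that by blast
  moreover have "0 \<le> v \<bullet> (y - z)" if "y \<in> S" "z \<in> G" for y z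
  proof -
    have "0 \<le> v \<bullet> (y - a)"
      using face_of_linear_one_sided[OF S facet_of_imp_face_of[OF G] a
          facet_of_hyperplane_section[OF S G a v] y0(1) v_y0 that(1)] .
    moreover have "v \<bullet> (z - a) = 0" using v(3) diff_in_direction_space a that(2) by blast
    ultimately show ?thesis by (simp add: inner_diff_right)
  qed
  ultimately show thesis using that v unfolding is_inward_normal_def by blast
qed

lemma is_inward_normal_unique:
  assumes G: "G facet_of S" and v: "is_inward_normal S G v" and w: "is_inward_normal S G w"
  shows "w = v"
proof -
  obtain a where a: "a \<in> G" using G by (auto simp: facet_of_def)
  have "w = v \<or> w = - v"
    using v w is_inward_normal_orthogonal[OF v a] is_inward_normal_orthogonal[OF w a]
    by (intro codim_one_unit_orthogonal_unique[OF subspace_direction_space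
        subspace_direction_space facet_of_direction_space[OF G]]) (auto simp: is_inward_normal_def)
  moreover have "w \<noteq> - v"
  proof
    assume "w = - v"
    then have "v \<bullet> (y - a) = 0" if "y \<in> S" for y
      using v w that a by (force simp: is_inward_normal_def)
    then have "v \<bullet> v = 0"
      using inner_direction_space_eq_0[of a S v v] a facet_of_imp_subset[OF G] v
      by (auto simp: is_inward_normal_def)
    then show False using v by (simp add: is_inward_normal_def)
  qed
  ultimately show ?thesis by blast
qed

lemma is_inward_normal_inward_normal:
  assumes "convex S" "G facet_of S"
  shows "is_inward_normal S G (inward_normal S G)"
  using is_inward_normal_exists[OF assms] is_inward_normal_unique[OF assms(2)]
  unfolding inward_normal_def by (metis theI)

lemma
  assumes "convex S" "G facet_of S"
  shows inward_normal_unit: "norm (inward_normal S G) = 1"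
    and inward_normal_in_direction_space: "inward_normal S G \<in> direction_space S"
    and inward_normal_nonneg: "\<And>y z. y \<in> S \<Longrightarrow> z \<in> G \<Longrightarrow> 0 \<le> inward_normal S G \<bullet> (y - z)"
  using is_inward_normal_inward_normal[OF assms] by (auto simp: is_inward_normal_def)

lemma inward_normal_orthogonal:
  assumes "convex S" "G facet_of S" "d \<in> direction_space G"
  shows "inward_normal S G \<bullet> d = 0"
proof -
  obtain a where "a \<in> G" using assms(2) by (auto simp: facet_of_def)
  then show ?thesis
    using is_inward_normal_orthogonal[OF is_inward_normal_inward_normal[OF assms(1,2)]] assms(3)
    by blast
qed

lemma inward_normal_decomposition:
  assumes "convex S" "G facet_of S" "x \<in> direction_space S"
  shows "x - (inward_normal S G \<bullet> x) *\<^sub>R inward_normal S G \<in> direction_space G"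
  using assms by (intro codim_one_orthogonal_decomposition[OF subspace_direction_space
      subspace_direction_space facet_of_direction_space[OF assms(2)]])
    (auto simp: inward_normal_unit inward_normal_in_direction_space inward_normal_orthogonal)

lemma inward_normal_positive_point:
  assumes "convex S" "G facet_of S" "a \<in> G"
  obtains y where "y \<in> S" "0 < inward_normal S G \<bullet> (y - a)"
proof -
  have "G \<noteq> S" using assms(2) by auto
  then obtain y where y: "y \<in> S" "y \<notin> G" using facet_of_imp_subset[OF assms(2)] by blast
  have "inward_normal S G \<bullet> (y - a) \<noteq> 0"
    using facet_of_hyperplane_section[OF assms inward_normal_in_direction_space[OF assms(1,2)]
        inward_normal_unit[OF assms(1,2)] inward_normal_orthogonal[OF assms(1,2)] y(1)] y(2)
    by blast
  then have "0 < inward_normal S G \<bullet> (y - a)"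
    using inward_normal_nonneg[OF assms(1,2) y(1) assms(3)] by linarith
  then show thesis using that y(1) by blast
qed

section \<open>Faces of codimension two\<close>

lemma unit_normal_in_plane_coefficients:
  fixes u1 u2 n :: "'a::real_inner"
  assumes u: "norm u1 = 1" "norm u2 = 1" and "norm n = 1"
    and n: "n = a *\<^sub>R u1 + b *\<^sub>R u2" "n \<bullet> u1 = 0" "0 < n \<bullet> u2"
  shows "a = - b * (u1 \<bullet> u2)" "0 < b" "b\<^sup>2 * (1 - (u1 \<bullet> u2)\<^sup>2) = 1"
proof -
  have u11: "u1 \<bullet> u1 = 1" and u22: "u2 \<bullet> u2 = 1" using u by (simp_all add: dot_square_norm)
  have "n \<bullet> u1 = a * (u1 \<bullet> u1) + b * (u2 \<bullet> u1)" by (simp add: n(1) inner_add_left)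
  then show a: "a = - b * (u1 \<bullet> u2)" using n(2) u11 by (simp add: inner_commute)
  have "1 = n \<bullet> n" using \<open>norm n = 1\<close> by (simp add: dot_square_norm)
  also have "\<dots> = a * (n \<bullet> u1) + b * (n \<bullet> u2)" by (subst (2) n(1)) (simp add: inner_add_right)
  finally have b: "b * (n \<bullet> u2) = 1" using n(2) by simp
  then show "0 < b" using n(3) by (metis zero_less_mult_pos2 zero_less_one)
  have "n \<bullet> u2 = b * (1 - (u1 \<bullet> u2)\<^sup>2)"
    using u22 a by (simp add: n(1) inner_add_left power2_eq_square algebra_simps)
  then have "b\<^sup>2 * (1 - (u1 \<bullet> u2)\<^sup>2) = b * (n \<bullet> u2)" by (simp add: power2_eq_square)
  then show "b\<^sup>2 * (1 - (u1 \<bullet> u2)\<^sup>2) = 1" using b by simp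
qed

lemma unit_normals_in_plane_mirror:
  fixes u1 u2 n1 n2 :: "'a::real_inner"
  assumes u: "norm u1 = 1" "norm u2 = 1" and n: "norm n1 = 1" "norm n2 = 1"
    and n1: "n1 = a1 *\<^sub>R u1 + b1 *\<^sub>R u2" "n1 \<bullet> u1 = 0" "0 < n1 \<bullet> u2"
    and n2: "n2 = a2 *\<^sub>R u1 + b2 *\<^sub>R u2" "n2 \<bullet> u2 = 0" "0 < n2 \<bullet> u1"
  shows "n1 = b1 *\<^sub>R (u2 - (u1 \<bullet> u2) *\<^sub>R u1) \<and> n2 = b1 *\<^sub>R (u1 - (u1 \<bullet> u2) *\<^sub>R u2)"
proof -
  note c1 = unit_normal_in_plane_coefficients[OF u n(1) n1]
  have "n2 = b2 *\<^sub>R u2 + a2 *\<^sub>R u1" using n2(1) by simp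
  note c2 = unit_normal_in_plane_coefficients[OF u(2,1) n(2) this n2(2,3),
      unfolded inner_commute[of u2]]
  have "1 - (u1 \<bullet> u2)\<^sup>2 \<noteq> 0" using c1(3) by auto
  then have "b1\<^sup>2 = a2\<^sup>2" using c1(3) c2(3) by (metis mult_right_cancel)
  then have "b1 = a2" using c1(2) c2(2) by (simp add: power2_eq_iff_nonneg)
  then show ?thesis using c1(1) c2(1) n1(1) n2(1) by (simp add: algebra_simps)
qed

lemma linear_mirror_pair_symmetric:
  fixes f g :: "'a::real_vector \<Rightarrow> real"
  assumes "linear f" "linear g"
    and "n1 = b *\<^sub>R (u2 - c *\<^sub>R u1)" "n2 = b *\<^sub>R (u1 - c *\<^sub>R u2)"
  shows "g n1 * f u1 + g n2 * f u2 = f n1 * g u1 + f n2 * g u2"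
  unfolding assms(3,4) using assms(1,2) by (simp add: linear_diff linear_scale algebra_simps)

lemma facet_of_subset_eq:
  assumes "convex S" "G1 facet_of S" "G2 facet_of S" "G2 \<subseteq> G1"
  shows "G1 = G2"
proof (rule ccontr)
  assume "G1 \<noteq> G2"
  have "G2 face_of G1"
    using face_of_subset[OF facet_of_imp_face_of[OF assms(3)] assms(4)
        facet_of_imp_subset[OF assms(2)]] .
  then have "aff_dim G2 < aff_dim G1"
    using face_of_aff_dim_lt[OF face_of_imp_convex[OF facet_of_imp_face_of[OF assms(2)]]]
      \<open>G1 \<noteq> G2\<close> by blast
  then show False using assms(2,3) by (simp add: facet_of_def)
qed

locale ridge =
  fixes S F :: "'a::euclidean_space set"
  assumes convex: "convex S" and face: "F face_of S" and nonempty: "F \<noteq> {}"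
    and aff_dim_ridge: "aff_dim F = aff_dim S - 2"
begin

abbreviation facets_through :: "'a set set" where
  "facets_through \<equiv> {G. G facet_of S \<and> F \<subseteq> G}"

definition normal_plane :: "'a set" where
  "normal_plane = {y \<in> direction_space S. \<forall>x \<in> direction_space F. orthogonal x y}"

lemma dim_normal_plane: "dim normal_plane = 2"
proof -
  obtain a where a: "a \<in> F" using nonempty by blast
  have "F \<subseteq> S" using face by (rule face_of_imp_subset)
  have "dim normal_plane + dim (direction_space F) = dim (direction_space S)"
    unfolding normal_plane_def
    by (rule dim_subspace_orthogonal_to_vectors) (simp_all add: direction_space_mono \<open>F \<subseteq> S\<close>)
  moreover have "aff_dim F = int (dim (direction_space F))"
    using a by (rule aff_dim_eq_dim_direction_space)
  moreover have "aff_dim S = int (dim (direction_space S))"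
    using a \<open>F \<subseteq> S\<close> by (intro aff_dim_eq_dim_direction_space) auto
  ultimately show ?thesis using aff_dim_ridge by linarith
qed

lemma facet_through_convex: "G \<in> facets_through \<Longrightarrow> convex G"
  by (auto dest: facet_of_imp_face_of face_of_imp_convex)

lemma ridge_facet_of_facet:
  assumes "G \<in> facets_through"
  shows "F facet_of G"
proof -
  have "F face_of G"
    using assms face_of_subset[OF face] facet_of_imp_subset by blast
  then show ?thesis
    using assms nonempty aff_dim_ridge by (simp add: facet_of_def)
qed

lemma normals_in_normal_plane:
  assumes G: "G \<in> facets_through"
  shows "inward_normal G F \<in> normal_plane" "inward_normal S G \<in> normal_plane"
proof -
  note FG = facet_through_convex[OF G] ridge_facet_of_facet[OF G]
  have "G facet_of S" "F \<subseteq> G" using G by auto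
  have "direction_space G \<subseteq> direction_space S" "direction_space F \<subseteq> direction_space G"
    using facet_of_direction_space(1) \<open>G facet_of S\<close> FG(2) by blast+
  then show "inward_normal G F \<in> normal_plane" "inward_normal S G \<in> normal_plane"
    using inward_normal_in_direction_space[OF FG] inward_normal_orthogonal[OF FG]
      inward_normal_in_direction_space[OF convex \<open>G facet_of S\<close>]
      inward_normal_orthogonal[OF convex \<open>G facet_of S\<close>]
    by (auto simp: normal_plane_def orthogonal_def inner_commute)
qed

lemma ridge_normals_independent:
  assumes G1: "G1 \<in> facets_through" and G2: "G2 \<in> facets_through" and "G1 \<noteq> G2"
  shows "inward_normal G2 F \<notin> span {inward_normal G1 F}"
proof
  assume u2: "inward_normal G2 F \<in> span {inward_normal G1 F}"
  note F1 = facet_through_convex[OF G1] ridge_facet_of_facet[OF G1]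
  note F2 = facet_through_convex[OF G2] ridge_facet_of_facet[OF G2]
  have "span {inward_normal G1 F} \<subseteq> direction_space G1"
    using inward_normal_in_direction_space[OF F1] by (simp add: span_minimal)
  then have u2_G1: "inward_normal G2 F \<in> direction_space G1" using u2 by blast
  have "direction_space G2 \<subseteq> direction_space G1"
  proof
    fix x assume x: "x \<in> direction_space G2"
    have "x - (inward_normal G2 F \<bullet> x) *\<^sub>R inward_normal G2 F \<in> direction_space G1"
      using inward_normal_decomposition[OF F2 x] direction_space_mono G1 by blast
    then show "x \<in> direction_space G1" using u2_G1 subspace_direction_space
      by (metis diff_add_cancel subspace_add subspace_scale)
  qed
  then have "G2 \<subseteq> G1"
  proof (intro subsetI)
    fix y assume "y \<in> G2"
    obtain a where a: "a \<in> F" using nonempty by blast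
    then have "y - a \<in> direction_space G1"
      using \<open>y \<in> G2\<close> G2 diff_in_direction_space[of y G2 a]
        \<open>direction_space G2 \<subseteq> direction_space G1\<close> by blast
    then show "y \<in> G1"
      using face_of_mem_if_direction[OF convex, of G1 a y] \<open>y \<in> G2\<close> a G1 G2
      by (auto dest: facet_of_imp_face_of facet_of_imp_subset)
  qed
  then show False using facet_of_subset_eq[OF convex] G1 G2 \<open>G1 \<noteq> G2\<close> by blast
qed

lemma normal_plane_spanned:
  assumes G1: "G1 \<in> facets_through" and G2: "G2 \<in> facets_through" and "G1 \<noteq> G2"
    and w: "w \<in> normal_plane"
  obtains a b where "w = a *\<^sub>R inward_normal G1 F + b *\<^sub>R inward_normal G2 F"
proof -
  let ?u1 = "inward_normal G1 F" and ?u2 = "inward_normal G2 F"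
  have "?u2 \<noteq> 0"
    using inward_normal_unit[OF facet_through_convex[OF G2] ridge_facet_of_facet[OF G2]] by auto
  then have "independent {?u2}" by (simp add: independent_insert)
  moreover have "?u1 \<notin> span {?u2}"
    using ridge_normals_independent[OF G2 G1] \<open>G1 \<noteq> G2\<close> by blast
  ultimately have "independent {?u1, ?u2}" by (rule independent_insertI[rotated])
  moreover have "?u1 \<noteq> ?u2" using \<open>?u1 \<notin> span {?u2}\<close> span_base by blast
  then have "dim normal_plane \<le> card {?u1, ?u2}" using dim_normal_plane by simp
  moreover have "{?u1, ?u2} \<subseteq> normal_plane" using normals_in_normal_plane(1) G1 G2 by blast
  ultimately have "normal_plane \<subseteq> span {?u1, ?u2}"
    by (intro card_ge_dim_independent)
  then obtain a where "w - a *\<^sub>R ?u1 \<in> span {?u2}"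
    using w span_breakdown_eq by blast
  then obtain b where "w - a *\<^sub>R ?u1 = b *\<^sub>R ?u2" using span_singleton by auto
  then show thesis using that[of a b] by (simp add: algebra_simps)
qed

lemma inward_normal_inner_ridge_normal_pos:
  assumes G1: "G1 \<in> facets_through" and G2: "G2 \<in> facets_through" and "G1 \<noteq> G2"
  shows "0 < inward_normal S G1 \<bullet> inward_normal G2 F"
proof -
  let ?u1 = "inward_normal G1 F" and ?u2 = "inward_normal G2 F" and ?n1 = "inward_normal S G1"
  note F2 = facet_through_convex[OF G2] ridge_facet_of_facet[OF G2]
  have S1: "G1 facet_of S" "F \<subseteq> G1" and S2: "G2 facet_of S" using G1 G2 by auto
  obtain a where a: "a \<in> F" using nonempty by blast
  obtain y where y: "y \<in> G2" "0 < ?u2 \<bullet> (y - a)" using inward_normal_positive_point[OF F2 a] .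
  have "y - a - (?u2 \<bullet> (y - a)) *\<^sub>R ?u2 \<in> direction_space G1"
    using inward_normal_decomposition[OF F2 diff_in_direction_space[OF y(1)]] a G2
      direction_space_mono[OF S1(2)] by blast
  then have "?n1 \<bullet> (y - a) = (?u2 \<bullet> (y - a)) * (?n1 \<bullet> ?u2)"
    using inward_normal_orthogonal[OF convex S1(1)] by (fastforce simp: inner_diff_right)
  moreover have "0 \<le> ?n1 \<bullet> (y - a)"
    using inward_normal_nonneg[OF convex S1(1)] y(1) a S1(2) facet_of_imp_subset[OF S2] by blast
  ultimately have "0 \<le> ?n1 \<bullet> ?u2" using y(2) by (simp add: zero_le_mult_iff)
  moreover have "?n1 \<bullet> ?u2 \<noteq> 0"
  proof
    assume "?n1 \<bullet> ?u2 = 0"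
    obtain p q where pq: "?n1 = p *\<^sub>R ?u1 + q *\<^sub>R ?u2"
      using normal_plane_spanned[OF G1 G2 \<open>G1 \<noteq> G2\<close> normals_in_normal_plane(2)[OF G1]] .
    have "?n1 \<bullet> ?u1 = 0"
      using inward_normal_orthogonal[OF convex S1(1) inward_normal_in_direction_space[OF
          facet_through_convex[OF G1] ridge_facet_of_facet[OF G1]]] .
    then have "?n1 \<bullet> ?n1 = 0"
      using \<open>?n1 \<bullet> ?u2 = 0\<close> by (subst (2) pq) (simp add: inner_add_right)
    then show False using inward_normal_unit[OF convex S1(1)] by simp
  qed
  ultimately show ?thesis by simp
qed

lemma ridge_normal_orthogonal_facet_normal:
  assumes "G \<in> facets_through"
  shows "inward_normal S G \<bullet> inward_normal G F = 0"
  using assms inward_normal_orthogonal[OF convex _ inward_normal_in_direction_space[OF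
        facet_through_convex[OF assms] ridge_facet_of_facet[OF assms]]]
  by blast

lemma at_most_two_facets_through:
  assumes G1: "G1 \<in> facets_through" and G2: "G2 \<in> facets_through"
    and G3: "G3 \<in> facets_through" and "G1 \<noteq> G2" "G1 \<noteq> G3" "G2 \<noteq> G3"
  shows False
proof -
  \<comment> \<open>pairing \<open>u3 = a u1 + b u2\<close> with \<open>n1\<close> and \<open>n2\<close> gives \<open>a, b > 0\<close>, so \<open>n3 \<bullet> u3 > 0\<close>\<close>
  let ?n = "\<lambda>G. inward_normal S G" and ?u = "\<lambda>G. inward_normal G F"
  obtain a b where ab: "?u G3 = a *\<^sub>R ?u G1 + b *\<^sub>R ?u G2"
    using normal_plane_spanned[OF G1 G2 \<open>G1 \<noteq> G2\<close> normals_in_normal_plane(1)[OF G3]] .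
  note pos = inward_normal_inner_ridge_normal_pos
  have "?n G1 \<bullet> ?u G3 = b * (?n G1 \<bullet> ?u G2)"
    using ridge_normal_orthogonal_facet_normal[OF G1] by (simp add: ab inner_add_right)
  then have "0 < b"
    using pos[OF G1 G3] pos[OF G1 G2] assms(4,5) by (simp add: zero_less_mult_iff)
  have "?n G2 \<bullet> ?u G3 = a * (?n G2 \<bullet> ?u G1)"
    using ridge_normal_orthogonal_facet_normal[OF G2] by (simp add: ab inner_add_right)
  then have "0 < a"
    using pos[OF G2 G3] pos[OF G2 G1] assms(4,6) by (simp add: zero_less_mult_iff)
  have "?n G3 \<bullet> ?u G3 = a * (?n G3 \<bullet> ?u G1) + b * (?n G3 \<bullet> ?u G2)"
    by (simp add: ab inner_add_right)
  also have "\<dots> > 0"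
    using \<open>0 < a\<close> \<open>0 < b\<close> pos[OF G3 G1] pos[OF G3 G2] assms(5,6) by (simp add: add_pos_pos)
  finally show False using ridge_normal_orthogonal_facet_normal[OF G3] by simp
qed

lemma facets_through_eq_pair:
  assumes "polyhedron S"
  obtains G1 G2 where "G1 \<noteq> G2" "facets_through = {G1, G2}"
proof -
  have "F \<noteq> S" using aff_dim_ridge by auto
  obtain G1 where G1: "G1 \<in> facets_through"
    using face_of_polyhedron_subset_facet[OF assms face nonempty \<open>F \<noteq> S\<close>] by blast
  have "\<exists>G2 \<in> facets_through. G2 \<noteq> G1"
  proof (rule ccontr)
    assume "\<not> ?thesis"
    then have "facets_through = {G1}" using G1 by blast
    then have "F = G1" using face_of_polyhedron[OF assms face nonempty \<open>F \<noteq> S\<close>] by simp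
    then show False using G1 aff_dim_ridge by (simp add: facet_of_def)
  qed
  then obtain G2 where G2: "G2 \<in> facets_through" "G2 \<noteq> G1" by blast
  have "facets_through = {G1, G2}"
    using at_most_two_facets_through[OF G1 G2(1)] G1 G2 by blast
  then show thesis using that G2(2) by blast
qed

lemma sum_facets_through_symmetric:
  fixes f g :: "'a \<Rightarrow> real"
  assumes "polyhedron S" and fg: "linear f" "linear g"
  shows "(\<Sum>G\<in>facets_through. g (inward_normal S G) * f (inward_normal G F))
       = (\<Sum>G\<in>facets_through. f (inward_normal S G) * g (inward_normal G F))"
proof -
  obtain G1 G2 where "G1 \<noteq> G2" and eq: "facets_through = {G1, G2}"
    using facets_through_eq_pair[OF assms(1)] .
  then have G1: "G1 \<in> facets_through" and G2: "G2 \<in> facets_through" by auto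
  let ?n = "\<lambda>G. inward_normal S G" and ?u = "\<lambda>G. inward_normal G F"
  obtain a1 b1 where n1: "?n G1 = a1 *\<^sub>R ?u G1 + b1 *\<^sub>R ?u G2"
    using normal_plane_spanned[OF G1 G2 \<open>G1 \<noteq> G2\<close> normals_in_normal_plane(2)[OF G1]] .
  obtain a2 b2 where n2: "?n G2 = a2 *\<^sub>R ?u G1 + b2 *\<^sub>R ?u G2"
    using normal_plane_spanned[OF G1 G2 \<open>G1 \<noteq> G2\<close> normals_in_normal_plane(2)[OF G2]] .
  have unit: "norm (?u G) = 1" "norm (?n G) = 1" if "G \<in> facets_through" for G
    using inward_normal_unit[OF facet_through_convex[OF that] ridge_facet_of_facet[OF that]]
      inward_normal_unit[OF convex] that by auto
  obtain b where "?n G1 = b *\<^sub>R (?u G2 - (?u G1 \<bullet> ?u G2) *\<^sub>R ?u G1)"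
      "?n G2 = b *\<^sub>R (?u G1 - (?u G1 \<bullet> ?u G2) *\<^sub>R ?u G2)"
    using unit_normals_in_plane_mirror[OF unit(1)[OF G1] unit(1)[OF G2]
        unit(2)[OF G1] unit(2)[OF G2]
        n1 ridge_normal_orthogonal_facet_normal[OF G1]
        inward_normal_inner_ridge_normal_pos[OF G1 G2 \<open>G1 \<noteq> G2\<close>]
        n2 ridge_normal_orthogonal_facet_normal[OF G2]
        inward_normal_inner_ridge_normal_pos[OF G2 G1 \<open>G1 \<noteq> G2\<close>[symmetric]]]
    by blast
  then show ?thesis
    unfolding eq using \<open>G1 \<noteq> G2\<close> linear_mirror_pair_symmetric[OF fg] by simp
qed

end

section \<open>Iterated products of weights on a polyhedral complex\<close>

lemma
  assumes "euclidean_polyhedral_complex \<iota> P" "\<sigma> \<in> P"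
  shows polyhedral_complex_inj_on: "inj_on \<iota> \<sigma>"
    and polyhedral_complex_polyhedron: "polyhedron (\<iota> ` \<sigma>)"
    and polyhedral_complex_homeomorphism: "\<exists>h. homeomorphism \<sigma> (\<iota> ` \<sigma>) \<iota> h"
    and polyhedral_complex_face_mem: "\<And>\<tau>. poly_face \<iota> \<tau> \<sigma> \<Longrightarrow> \<tau> \<in> P"
  using assms unfolding euclidean_polyhedral_complex_def by blast+

lemma polyhedral_complex_subset_imp_face:
  assumes "euclidean_polyhedral_complex \<iota> P" "\<sigma> \<in> P" "\<rho> \<in> P" "\<rho> \<subseteq> \<sigma>"
  shows "poly_face \<iota> \<rho> \<sigma>"
proof -
  have "poly_face \<iota> (\<sigma> \<inter> \<rho>) \<sigma>"
    using assms(1-3) unfolding euclidean_polyhedral_complex_def by blast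
  moreover have "\<sigma> \<inter> \<rho> = \<rho>" using assms(4) by blast
  ultimately show ?thesis by simp
qed

lemma polyhedral_complex_finite_containing:
  assumes "euclidean_polyhedral_complex \<iota> P"
  shows "finite {\<sigma> \<in> P. x \<in> \<sigma>}"
proof -
  have "\<forall>x. \<exists>V. open V \<and> x \<in> V \<and> finite {\<sigma> \<in> P. \<sigma> \<inter> V \<noteq> {}}"
    using assms unfolding euclidean_polyhedral_complex_def by (elim conjE)
  then obtain V where V: "x \<in> V" "finite {\<sigma> \<in> P. \<sigma> \<inter> V \<noteq> {}}" by blast
  show ?thesis using V(1) by (intro finite_subset[OF _ V(2)]) blast
qed

lemma poly_face_imp_subset: "poly_face \<iota> \<tau> \<sigma> \<Longrightarrow> \<tau> \<subseteq> \<sigma>"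
  unfolding poly_face_def by blast

lemma poly_face_iff:
  assumes "inj_on \<iota> \<sigma>"
  shows "poly_face \<iota> \<tau> \<sigma> \<longleftrightarrow> \<tau> \<subseteq> \<sigma> \<and> \<iota> ` \<tau> face_of \<iota> ` \<sigma>"
proof
  assume "poly_face \<iota> \<tau> \<sigma>"
  then obtain F where F: "F face_of \<iota> ` \<sigma>" "\<tau> = {x\<in>\<sigma>. \<iota> x \<in> F}"
    unfolding poly_face_def by blast
  then have "\<iota> ` \<tau> = F" using face_of_imp_subset by fastforce
  then show "\<tau> \<subseteq> \<sigma> \<and> \<iota> ` \<tau> face_of \<iota> ` \<sigma>" using F by auto
next
  assume "\<tau> \<subseteq> \<sigma> \<and> \<iota> ` \<tau> face_of \<iota> ` \<sigma>"
  moreover from this have "\<tau> = {x\<in>\<sigma>. \<iota> x \<in> \<iota> ` \<tau>}"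
    using assms by (auto simp: inj_on_def)
  ultimately show "poly_face \<iota> \<tau> \<sigma>" unfolding poly_face_def by blast
qed

lemma
  assumes "pw_affine \<iota> P U f" "\<sigma> \<in> restr P U"
  shows linear_lin_rep: "linear (lin_rep \<iota> \<sigma> U f)"
    and pw_affine_eq_lin_rep: "\<And>x. x \<in> \<sigma> \<inter> U \<Longrightarrow> f x = lin_rep \<iota> \<sigma> U f (\<iota> x)"
proof -
  have "\<exists>l. linear l \<and> (\<forall>x\<in>\<sigma> \<inter> U. f x = l (\<iota> x))"
    using assms unfolding pw_affine_def by blast
  then have "linear (lin_rep \<iota> \<sigma> U f) \<and> (\<forall>x\<in>\<sigma> \<inter> U. f x = lin_rep \<iota> \<sigma> U f (\<iota> x))"
    unfolding lin_rep_def by (rule someI_ex)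
  then show "linear (lin_rep \<iota> \<sigma> U f)" "\<And>x. x \<in> \<sigma> \<inter> U \<Longrightarrow> f x = lin_rep \<iota> \<sigma> U f (\<iota> x)"
    by auto
qed

lemma lin_rep_eq_on_face:
  assumes P: "euclidean_polyhedral_complex \<iota> P" and U: "open U" and f: "pw_affine \<iota> P U f"
    and \<sigma>: "\<sigma> \<in> P" and \<tau>: "\<tau> \<in> P" "\<tau> \<subseteq> \<sigma>" "\<tau> \<inter> U \<noteq> {}"
    and u: "u \<in> direction_space (\<iota> ` \<tau>)"
  shows "lin_rep \<iota> \<tau> U f u = lin_rep \<iota> \<sigma> U f u"
proof -
  have R: "\<tau> \<in> restr P U" "\<sigma> \<in> restr P U" using \<sigma> \<tau> by (auto simp: restr_def)
  obtain h where "homeomorphism \<tau> (\<iota> ` \<tau>) \<iota> h"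
    using polyhedral_complex_homeomorphism[OF P \<tau>(1)] by blast
  moreover have "openin (top_of_set \<tau>) (\<tau> \<inter> U)" using U by blast
  ultimately have "openin (top_of_set (\<iota> ` \<tau>)) (\<iota> ` (\<tau> \<inter> U))"
    by (rule homeomorphism_imp_open_map)
  then obtain T where T: "open T" "\<iota> ` (\<tau> \<inter> U) = \<iota> ` \<tau> \<inter> T" using openin_open by blast
  show ?thesis
  proof (rule linear_eq_on_direction_space[OF _ T(1) _
        linear_lin_rep[OF f R(1)] linear_lin_rep[OF f R(2)] _ u])
    show "convex (\<iota> ` \<tau>)"
      using polyhedral_complex_polyhedron[OF P \<tau>(1)] polyhedron_imp_convex by blast
    show "\<iota> ` \<tau> \<inter> T \<noteq> {}" using T(2) \<tau>(3) by (metis image_is_empty)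
  next
    fix y assume "y \<in> \<iota> ` \<tau> \<inter> T"
    then obtain x where x: "x \<in> \<tau> \<inter> U" "y = \<iota> x" using T(2) by (metis imageE)
    then have "x \<in> \<sigma> \<inter> U" using \<tau>(2) by blast
    then show "lin_rep \<iota> \<tau> U f y = lin_rep \<iota> \<sigma> U f y"
      using pw_affine_eq_lin_rep[OF f R(1) x(1)] pw_affine_eq_lin_rep[OF f R(2)] x(2) by simp
  qed
qed

lemma wmult_eq_0:
  assumes "\<not> (\<tau> \<in> restr P U \<and> pdim \<iota> \<tau> = m - 1)"
  shows "wmult \<iota> P U f m c \<tau> = 0"
  unfolding wmult_def by (rule if_not_P[OF assms])

definition intermediate_faces ::
    "('x \<Rightarrow> 'n::euclidean_space) \<Rightarrow> 'x set set \<Rightarrow> 'x set \<Rightarrow> 'x set \<Rightarrow> 'x set \<Rightarrow> 'x set set"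
  where "intermediate_faces \<iota> P U \<rho> \<sigma> =
    {\<tau>\<in>restr P U. pdim \<iota> \<tau> = pdim \<iota> \<sigma> - 1 \<and> poly_face \<iota> \<rho> \<tau> \<and> poly_face \<iota> \<tau> \<sigma>}"

definition iterated_slope ::
    "('x \<Rightarrow> 'n::euclidean_space) \<Rightarrow> 'x set set \<Rightarrow> 'x set \<Rightarrow> ('x \<Rightarrow> real) \<Rightarrow> ('x \<Rightarrow> real)
     \<Rightarrow> 'x set \<Rightarrow> 'x set \<Rightarrow> real" where
  "iterated_slope \<iota> P U f g \<rho> \<sigma> =
     (\<Sum>\<tau>\<in>intermediate_faces \<iota> P U \<rho> \<sigma>.
        lin_rep \<iota> \<sigma> U g (normal_vec \<iota> \<sigma> \<tau>) * lin_rep \<iota> \<tau> U f (normal_vec \<iota> \<tau> \<rho>))"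

lemma wmult_wmult_eq_sum_iterated_slope:
  assumes P: "euclidean_polyhedral_complex \<iota> P"
    and \<rho>: "\<rho> \<in> restr P U" "pdim \<iota> \<rho> = m - 1 - 1"
  shows "wmult \<iota> P U f (m - 1) (wmult \<iota> P U g m c) \<rho> =
    (\<Sum>\<sigma>\<in>{\<sigma>\<in>restr P U. pdim \<iota> \<sigma> = m \<and> \<rho> \<subseteq> \<sigma>}. c \<sigma> * iterated_slope \<iota> P U f g \<rho> \<sigma>)"
proof -
  define A where "A = {\<tau>\<in>restr P U. pdim \<iota> \<tau> = m - 1 \<and> poly_face \<iota> \<rho> \<tau>}"
  define C where "C = {\<sigma>\<in>restr P U. pdim \<iota> \<sigma> = m \<and> \<rho> \<subseteq> \<sigma>}"
  define h where "h \<tau> \<sigma> =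
    c \<sigma> * lin_rep \<iota> \<sigma> U g (normal_vec \<iota> \<sigma> \<tau>) * lin_rep \<iota> \<tau> U f (normal_vec \<iota> \<tau> \<rho>)" for \<tau> \<sigma>
  obtain x where "x \<in> \<rho>" using \<rho>(1) by (auto simp: restr_def)
  then have "A \<subseteq> {\<sigma> \<in> P. x \<in> \<sigma>}" "C \<subseteq> {\<sigma> \<in> P. x \<in> \<sigma>}"
    by (auto simp: A_def C_def restr_def dest: poly_face_imp_subset)
  then have fin: "finite A" "finite C"
    using finite_subset polyhedral_complex_finite_containing[OF P] by blast+
  have inner: "- wmult \<iota> P U g m c \<tau> =
      (\<Sum>\<sigma> | \<sigma> \<in> C \<and> poly_face \<iota> \<tau> \<sigma>. c \<sigma> * lin_rep \<iota> \<sigma> U g (normal_vec \<iota> \<sigma> \<tau>))"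
    if "\<tau> \<in> A" for \<tau>
  proof -
    have "\<rho> \<subseteq> \<tau>" using that by (auto simp: A_def dest: poly_face_imp_subset)
    then have "{\<sigma>\<in>restr P U. pdim \<iota> \<sigma> = m \<and> poly_face \<iota> \<tau> \<sigma>} = {\<sigma>. \<sigma> \<in> C \<and> poly_face \<iota> \<tau> \<sigma>}"
      using poly_face_imp_subset by (fastforce simp: C_def)
    then show ?thesis using that by (simp add: wmult_def A_def)
  qed
  have "wmult \<iota> P U f (m - 1) (wmult \<iota> P U g m c) \<rho> =
      (\<Sum>\<tau>\<in>A. - wmult \<iota> P U g m c \<tau> * lin_rep \<iota> \<tau> U f (normal_vec \<iota> \<tau> \<rho>))"
    using \<rho> by (simp add: wmult_def A_def sum_negf)
  also have "\<dots> = (\<Sum>\<tau>\<in>A. \<Sum>\<sigma> | \<sigma> \<in> C \<and> poly_face \<iota> \<tau> \<sigma>. h \<tau> \<sigma>)"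
    by (rule sum.cong) (simp_all add: inner h_def sum_distrib_right)
  also have "\<dots> = (\<Sum>\<sigma>\<in>C. \<Sum>\<tau> | \<tau> \<in> A \<and> poly_face \<iota> \<tau> \<sigma>. h \<tau> \<sigma>)"
    by (rule sum.swap_restrict[OF fin])
  also have "\<dots> = (\<Sum>\<sigma>\<in>C. c \<sigma> * iterated_slope \<iota> P U f g \<rho> \<sigma>)"
  proof (rule sum.cong[OF refl])
    fix \<sigma> assume "\<sigma> \<in> C"
    then have "{\<tau>. \<tau> \<in> A \<and> poly_face \<iota> \<tau> \<sigma>} = intermediate_faces \<iota> P U \<rho> \<sigma>"
      by (auto simp: A_def C_def intermediate_faces_def)
    then show "(\<Sum>\<tau> | \<tau> \<in> A \<and> poly_face \<iota> \<tau> \<sigma>. h \<tau> \<sigma>) = c \<sigma> * iterated_slope \<iota> P U f g \<rho> \<sigma>"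
      by (simp add: iterated_slope_def h_def sum_distrib_left mult.assoc)
  qed
  finally show ?thesis by (simp add: C_def)
qed

lemma bij_betw_intermediate_faces_facets:
  assumes P: "euclidean_polyhedral_complex \<iota> P" and \<sigma>: "\<sigma> \<in> P"
    and \<rho>: "\<rho> \<in> restr P U" "\<rho> \<subseteq> \<sigma>"
  shows "bij_betw ((`) \<iota>) (intermediate_faces \<iota> P U \<rho> \<sigma>) {G. G facet_of \<iota> ` \<sigma> \<and> \<iota> ` \<rho> \<subseteq> G}"
    (is "bij_betw _ ?T ?G")
proof (rule bij_betw_imageI)
  have inj: "inj_on \<iota> \<sigma>" using polyhedral_complex_inj_on[OF P \<sigma>] .
  have "\<rho> \<noteq> {}" using \<rho>(1) by (auto simp: restr_def)
  show "inj_on ((`) \<iota>) ?T"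
    using inj
    by (intro inj_onI)
      (auto simp: inj_on_image_eq_iff intermediate_faces_def dest!: poly_face_imp_subset)
  show "(`) \<iota> ` ?T = ?G"
  proof (intro equalityI subsetI)
    fix G assume "G \<in> (`) \<iota> ` ?T"
    then obtain \<tau> where \<tau>: "\<tau> \<in> ?T" "G = \<iota> ` \<tau>" by blast
    then have "G face_of \<iota> ` \<sigma>" "\<rho> \<subseteq> \<tau>"
      using poly_face_iff[OF inj] poly_face_imp_subset[of \<iota> \<rho> \<tau>]
      by (auto simp: intermediate_faces_def)
    then show "G \<in> ?G"
      using \<tau> \<open>\<rho> \<noteq> {}\<close> by (auto simp: facet_of_def pdim_def intermediate_faces_def)
  next
    fix G assume G: "G \<in> ?G"
    define \<tau> where "\<tau> = {x\<in>\<sigma>. \<iota> x \<in> G}"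
    have "G \<subseteq> \<iota> ` \<sigma>" using G facet_of_imp_subset by blast
    then have G_eq: "\<iota> ` \<tau> = G" by (auto simp: \<tau>_def)
    have "poly_face \<iota> \<tau> \<sigma>"
      using G unfolding \<tau>_def poly_face_def by (blast dest: facet_of_imp_face_of)
    then have "\<tau> \<in> P" using polyhedral_complex_face_mem[OF P \<sigma>] by blast
    have "\<rho> \<subseteq> \<tau>" using G \<rho>(2) by (auto simp: \<tau>_def)
    then have "\<tau> \<in> restr P U" using \<open>\<tau> \<in> P\<close> \<rho>(1) by (auto simp: restr_def)
    have "\<iota> ` \<rho> face_of \<iota> ` \<sigma>"
      using polyhedral_complex_subset_imp_face[OF P \<sigma> _ \<rho>(2)] \<rho>(1) poly_face_iff[OF inj]
      by (auto simp: restr_def)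
    then have "\<iota> ` \<rho> face_of G"
      using face_of_subset G \<open>G \<subseteq> \<iota> ` \<sigma>\<close> by blast
    then have "poly_face \<iota> \<rho> \<tau>"
      using poly_face_iff[OF inj_on_subset[OF inj]] \<open>\<rho> \<subseteq> \<tau>\<close> G_eq by (auto simp: \<tau>_def)
    moreover have "pdim \<iota> \<tau> = pdim \<iota> \<sigma> - 1"
      using G G_eq by (simp add: pdim_def facet_of_def)
    ultimately have "\<tau> \<in> ?T"
      using \<open>\<tau> \<in> restr P U\<close> \<open>poly_face \<iota> \<tau> \<sigma>\<close> by (simp add: intermediate_faces_def)
    then show "G \<in> (`) \<iota> ` ?T" using G_eq by blast
  qed
qed

lemma ridge_image:
  assumes P: "euclidean_polyhedral_complex \<iota> P"
    and \<rho>: "\<rho> \<in> restr P U" and \<sigma>: "\<sigma> \<in> P" "\<rho> \<subseteq> \<sigma>" "pdim \<iota> \<rho> = pdim \<iota> \<sigma> - 2"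
  shows "ridge (\<iota> ` \<sigma>) (\<iota> ` \<rho>)"
proof
  show "convex (\<iota> ` \<sigma>)"
    using polyhedral_complex_polyhedron[OF P \<sigma>(1)] polyhedron_imp_convex by blast
  show "\<iota> ` \<rho> face_of \<iota> ` \<sigma>"
    using polyhedral_complex_subset_imp_face[OF P \<sigma>(1) _ \<sigma>(2)] \<rho>
      poly_face_iff[OF polyhedral_complex_inj_on[OF P \<sigma>(1)]]
    by (auto simp: restr_def)
  show "\<iota> ` \<rho> \<noteq> {}" "aff_dim (\<iota> ` \<rho>) = aff_dim (\<iota> ` \<sigma>) - 2"
    using \<rho> \<sigma>(3) by (auto simp: restr_def pdim_def)
qed

lemma iterated_slope_eq_sum_facets_through:
  assumes P: "euclidean_polyhedral_complex \<iota> P" and U: "open U" and f: "pw_affine \<iota> P U f"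
    and \<rho>: "\<rho> \<in> restr P U" and \<sigma>: "\<sigma> \<in> P" "\<rho> \<subseteq> \<sigma>" "pdim \<iota> \<rho> = pdim \<iota> \<sigma> - 2"
  shows "iterated_slope \<iota> P U f g \<rho> \<sigma> =
    (\<Sum>G\<in>ridge.facets_through (\<iota> ` \<sigma>) (\<iota> ` \<rho>).
       lin_rep \<iota> \<sigma> U g (inward_normal (\<iota> ` \<sigma>) G) * lin_rep \<iota> \<sigma> U f (inward_normal G (\<iota> ` \<rho>)))"
proof -
  interpret ridge "\<iota> ` \<sigma>" "\<iota> ` \<rho>" using ridge_image[OF P \<rho> \<sigma>] .
  define T where "T = intermediate_faces \<iota> P U \<rho> \<sigma>"
  have bij: "bij_betw ((`) \<iota>) T facets_through"
    unfolding T_def by (rule bij_betw_intermediate_faces_facets[OF P \<sigma>(1) \<rho> \<sigma>(2)])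
  have "lin_rep \<iota> \<sigma> U g (normal_vec \<iota> \<sigma> \<tau>) * lin_rep \<iota> \<tau> U f (normal_vec \<iota> \<tau> \<rho>) =
      lin_rep \<iota> \<sigma> U g (inward_normal (\<iota> ` \<sigma>) (\<iota> ` \<tau>)) *
      lin_rep \<iota> \<sigma> U f (inward_normal (\<iota> ` \<tau>) (\<iota> ` \<rho>))" if \<tau>: "\<tau> \<in> T" for \<tau>
  proof -
    have "\<iota> ` \<tau> \<in> facets_through" using bij_betw_apply[OF bij \<tau>] .
    then have "inward_normal (\<iota> ` \<tau>) (\<iota> ` \<rho>) \<in> direction_space (\<iota> ` \<tau>)"
      using inward_normal_in_direction_space facet_through_convex ridge_facet_of_facet by blast
    moreover have "\<tau> \<in> P" "\<tau> \<subseteq> \<sigma>" "\<tau> \<inter> U \<noteq> {}"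
      using \<tau> by (auto simp: T_def intermediate_faces_def restr_def dest: poly_face_imp_subset)
    ultimately show ?thesis
      using lin_rep_eq_on_face[OF P U f \<sigma>(1)] by (simp add: normal_vec_eq_inward_normal)
  qed
  then have "iterated_slope \<iota> P U f g \<rho> \<sigma> =
      (\<Sum>\<tau>\<in>T. lin_rep \<iota> \<sigma> U g (inward_normal (\<iota> ` \<sigma>) (\<iota> ` \<tau>)) *
               lin_rep \<iota> \<sigma> U f (inward_normal (\<iota> ` \<tau>) (\<iota> ` \<rho>)))"
    unfolding iterated_slope_def T_def[symmetric] by (rule sum.cong[OF refl])
  also have "\<dots> = (\<Sum>G\<in>facets_through.
      lin_rep \<iota> \<sigma> U g (inward_normal (\<iota> ` \<sigma>) G) * lin_rep \<iota> \<sigma> U f (inward_normal G (\<iota> ` \<rho>)))"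
    by (rule sum.reindex_bij_betw[OF bij])
  finally show ?thesis .
qed

lemma iterated_slope_commute:
  assumes P: "euclidean_polyhedral_complex \<iota> P" and U: "open U"
    and f: "pw_affine \<iota> P U f" and g: "pw_affine \<iota> P U g"
    and \<rho>: "\<rho> \<in> restr P U" and \<sigma>: "\<sigma> \<in> P" "\<rho> \<subseteq> \<sigma>" "pdim \<iota> \<rho> = pdim \<iota> \<sigma> - 2"
  shows "iterated_slope \<iota> P U f g \<rho> \<sigma> = iterated_slope \<iota> P U g f \<rho> \<sigma>"
proof -
  interpret ridge "\<iota> ` \<sigma>" "\<iota> ` \<rho>" using ridge_image[OF P \<rho> \<sigma>] .
  have \<sigma>R: "\<sigma> \<in> restr P U" using \<rho> \<sigma> by (auto simp: restr_def)
  show ?thesis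
    unfolding iterated_slope_eq_sum_facets_through[OF P U f \<rho> \<sigma>]
      iterated_slope_eq_sum_facets_through[OF P U g \<rho> \<sigma>]
    by (rule sum_facets_through_symmetric[OF polyhedral_complex_polyhedron[OF P \<sigma>(1)]
          linear_lin_rep[OF f \<sigma>R] linear_lin_rep[OF g \<sigma>R]])
qed

theorem proposition3p10:
  fixes \<iota> :: "'x::second_countable_topology \<Rightarrow> 'n::euclidean_space"
    and P :: "'x set set" and U :: "'x set"
    and f g :: "'x \<Rightarrow> real" and c :: "'x set \<Rightarrow> real" and k :: nat
  assumes "euclidean_polyhedral_complex \<iota> P"
    and "open U"
    and "pw_affine \<iota> P U f" and "pw_affine \<iota> P U g"
    and "is_weight \<iota> P U (int k) c"
  shows "wmult \<iota> P U f (int k - 1) (wmult \<iota> P U g (int k) c)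
       = wmult \<iota> P U g (int k - 1) (wmult \<iota> P U f (int k) c)"
proof
  fix \<rho>
  show "wmult \<iota> P U f (int k - 1) (wmult \<iota> P U g (int k) c) \<rho>
      = wmult \<iota> P U g (int k - 1) (wmult \<iota> P U f (int k) c) \<rho>"
  proof (cases "\<rho> \<in> restr P U \<and> pdim \<iota> \<rho> = int k - 1 - 1")
    case False
    then show ?thesis by (simp only: wmult_eq_0[OF False])
  next
    case True
    have "iterated_slope \<iota> P U f g \<rho> \<sigma> = iterated_slope \<iota> P U g f \<rho> \<sigma>"
      if "\<sigma> \<in> restr P U" "pdim \<iota> \<sigma> = int k" "\<rho> \<subseteq> \<sigma>" for \<sigma>
      using iterated_slope_commute[OF assms(1-4)] True that by (simp add: restr_def)
    then show ?thesis
      unfolding wmult_wmult_eq_sum_iterated_slope[OF assms(1) conjunct1[OF True] conjunct2[OF True]]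
      by (intro sum.cong) auto
  qed
qed

end
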